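(* Consider the random process defined by $x(t+1)=x(t)-L(t)x(t)$, $t\in\mathbb{Z}_{\ge0}$, with deterministic initial condition $x(0)\in\mathbb{R}^I$. Assume that $\mathbf{1}^*\mathbb{E}[L(t)]=0$ and that there exists $\gamma>0$ such that $$\mathbb{E}[L(t)^*\mathbf{1}\mathbf{1}^*L(t)]\le \gamma\,\mathbb{E}[L(t)+L(t)^*-L(t)^*L(t)].$$ Then for every $t\ge 0$, $$\mathbb{E}\big[(\bar x(t)-\bar x(0))^2\big]\le \frac{\gamma}{N+\gamma}\,V(x(0)).$$ Moreover, if the system converges to consensus almost surely, i.e. $x(t)\to x_\infty\mathbf{1}$ for some random scalar $x_\infty\in\mathbb{R}$, then $\mathbb{E}[(x_\infty-\bar x(0))^2]\le \frac{\gamma}{N+\gamma}V(x(0))$.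
   Context: Let $I$ be a finite set of $N$ nodes. For each $t\in\mathbb{Z}_{\ge0}$ let $A(t)=(a_{ij}(t))_{i,j\in I}$ be a random matrix with $a_{ij}(t)\ge 0$ and $\sum_{\ell\in I}a_{i\ell}(t)=1$ for all $i$; the matrices $A(t)$, $t\ge0$, are independent and identically distributed (in particular $A(t)$ is independent of $x(t)$). Let $L(t)$ be the associated Laplacian: $L_{ij}(t)=-a_{ij}(t)$ for $i\ne j$ and $L_{ii}(t)=\sum_{j\ne i}a_{ij}(t)$. $\mathbf{1}$ is the all-ones vector, $M^*$ denotes the (conjugate) transpose. For $y\in\mathbb{R}^I$, $\bar y=\frac1N\sum_i y_i$ and $V(y)=\frac1N\sum_i(y_i-\bar y)^2$. For square matrices, $A\le B$ means $A-B$ is negative semidefinite. *)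

theory Defs
  imports "HOL-Probability.Probability"
begin

text \<open>Nodes are the elements of a finite type 'i, so N = CARD('i).
  Vectors in R^I are real^'i, matrices are real^'i^'i.\<close>

definition laplacian :: "real^'i^'i \<Rightarrow> real^'i^'i::finite" where
  "laplacian A = (\<chi> i j. if i = j then (\<Sum>k\<in>UNIV - {i}. A $ i $ k) else - A $ i $ j)"

definition ones_vec :: "real^'i" where
  "ones_vec = (\<chi> i. 1)"

definition ones_mat :: "real^'i^'i" where
  "ones_mat = (\<chi> i j. 1)"

definition avg :: "real^'i::finite \<Rightarrow> real" where
  "avg y = (\<Sum>i\<in>UNIV. y $ i) / real CARD('i)"

definition Vdis :: "real^'i::finite \<Rightarrow> real" where
  "Vdis y = (\<Sum>i\<in>UNIV. (y $ i - avg y)^2) / real CARD('i)"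

definition mat_expectation :: "'w measure \<Rightarrow> ('w \<Rightarrow> real^'i^'j) \<Rightarrow> real^'i^'j" where
  "mat_expectation M X = (\<chi> i j. prob_space.expectation M (\<lambda>\<omega>. X \<omega> $ i $ j))"

definition neg_semidef :: "real^'i^'i \<Rightarrow> bool" where
  "neg_semidef P \<longleftrightarrow> (\<forall>v. v \<bullet> (P *v v) \<le> 0)"

definition loewner_le :: "real^'i^'i \<Rightarrow> real^'i^'i \<Rightarrow> bool" where
  "loewner_le P Q \<longleftrightarrow> neg_semidef (P - Q)"

primrec xproc :: "(nat \<Rightarrow> 'w \<Rightarrow> real^'i^'i) \<Rightarrow> real^'i::finite \<Rightarrow> nat \<Rightarrow> 'w \<Rightarrow> real^'i" where
  "xproc A x0 0 \<omega> = x0"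
| "xproc A x0 (Suc t) \<omega> = xproc A x0 t \<omega> - laplacian (A t \<omega>) *v xproc A x0 t \<omega>"

end

theory Submission
  imports Defs
begin

(* Write m = avg x(0), e(t) = avg x(t) - m, and let
   flux(t) = 1^* L(t) x(t), so that e(t+1) = e(t) - flux(t)/N.  Since x(t) is a function of
   A(0), ..., A(t-1), it is independent of A(t); hence in every bilinear form
   w(x(t)) * Phi(A(t)) * x(t) the random matrix may be replaced by its mean.  This gives
     E[f(x(t)) flux(t)] = 0         (because 1^* E[L] = 0),
     E[flux(t)^2] = E[x^* E[L^* 1 1^* L] x],
     E|x(t+1)|^2 = E|x(t)|^2 - E[x^* E[L + L^* - L^* L] x],
   so by the Loewner hypothesis E[e(t)^2] + gamma/N^2 E|x(t)|^2 is non-increasing. *)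

lemma borel_measurable_vec_components:
  fixes f :: "'a \<Rightarrow> real^'n"
  assumes "\<And>i. (\<lambda>x. f x $ i) \<in> borel_measurable M"
  shows "f \<in> borel_measurable M"
proof (rule borel_measurable_euclidean_space[THEN iffD2], rule ballI)
  fix b :: "real^'n" assume "b \<in> Basis"
  then obtain i where "b = axis i 1"
    unfolding Basis_vec_def by auto
  then have "\<And>x. f x \<bullet> b = f x $ i" by (simp add: cart_eq_inner_axis)
  then show "(\<lambda>x. f x \<bullet> b) \<in> borel_measurable M"
    using assms[of i] by simp
qed

lemma borel_measurable_vec_nth:
  fixes f :: "'a \<Rightarrow> 'b::real_normed_vector^'n"
  assumes "f \<in> borel_measurable M"
  shows "(\<lambda>x. f x $ i) \<in> borel_measurable M"
  by (rule measurable_compose[OF assms borel_measurable_continuous_onI])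
     (intro continuous_on_component continuous_on_id)

lemma laplacian_nth:
  "laplacian B $ i $ j = (if i = j then (\<Sum>k\<in>UNIV - {i}. B $ i $ k) else - B $ i $ j)"
  by (simp add: laplacian_def)

lemma borel_measurable_laplacian_nth:
  fixes B :: "'a \<Rightarrow> real^'i::finite^'i"
  assumes "B \<in> borel_measurable M"
  shows "(\<lambda>x. laplacian (B x) $ i $ j) \<in> borel_measurable M"
  by (cases "i = j")
     (simp_all add: laplacian_nth borel_measurable_sum borel_measurable_vec_nth assms)

lemma laplacian_step_row:
  fixes B :: "real^'i::finite^'i"
  assumes "(\<Sum>l\<in>UNIV. B $ i $ l) = 1"
  shows "(x - laplacian B *v x) $ i = (\<Sum>j\<in>UNIV. B $ i $ j * x $ j)"
proof -
  have split: "(\<Sum>j\<in>UNIV. g j) = g i + (\<Sum>j\<in>UNIV - {i}. g j)" for g :: "'i \<Rightarrow> real"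
    by (simp add: sum.remove)
  have lap: "(laplacian B *v x) $ i
      = (\<Sum>k\<in>UNIV - {i}. B $ i $ k) * x $ i - (\<Sum>j\<in>UNIV - {i}. B $ i $ j * x $ j)"
    unfolding matrix_vector_mult_def vec_lambda_beta
    by (subst split) (simp add: laplacian_nth sum_negf)
  have diag: "B $ i $ i = 1 - (\<Sum>k\<in>UNIV - {i}. B $ i $ k)"
    using assms split[of "\<lambda>l. B $ i $ l"] by simp
  show ?thesis
    unfolding vector_minus_component lap split[of "\<lambda>j. B $ i $ j * x $ j"] diag
    by (simp add: algebra_simps)
qed

lemma laplacian_step_bound:
  fixes B :: "real^'i::finite^'i"
  assumes "(\<Sum>l\<in>UNIV. B $ i $ l) = 1" "\<And>j. B $ i $ j \<ge> 0" "\<And>j. \<bar>x $ j\<bar> \<le> c"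
  shows "\<bar>(x - laplacian B *v x) $ i\<bar> \<le> c"
proof -
  have "\<bar>\<Sum>j\<in>UNIV. B $ i $ j * x $ j\<bar> \<le> (\<Sum>j\<in>UNIV. \<bar>B $ i $ j * x $ j\<bar>)"
    by (rule sum_abs)
  also have "\<dots> \<le> (\<Sum>j\<in>UNIV. B $ i $ j * c)"
    by (intro sum_mono) (simp add: abs_mult assms(2) mult_left_mono assms(3))
  also have "\<dots> = c" using assms(1) by (simp add: sum_distrib_right[symmetric])
  finally show ?thesis using laplacian_step_row[OF assms(1)] by simp
qed

lemma laplacian_entry_bound:
  fixes B :: "real^'i::finite^'i"
  assumes "(\<Sum>l\<in>UNIV. B $ i $ l) = 1" "\<And>j. B $ i $ j \<ge> 0"
  shows "\<bar>laplacian B $ i $ j\<bar> \<le> 1"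
proof (cases "i = j")
  case True
  have "(\<Sum>k\<in>UNIV - {i}. B $ i $ k) \<le> (\<Sum>k\<in>UNIV. B $ i $ k)"
    by (intro sum_mono2) (auto simp: assms)
  moreover have "(\<Sum>k\<in>UNIV - {i}. B $ i $ k) \<ge> 0" by (intro sum_nonneg) (simp add: assms)
  ultimately show ?thesis using True assms by (simp add: laplacian_nth)
next
  case False
  have "B $ i $ j \<le> (\<Sum>k\<in>UNIV. B $ i $ k)"
    by (rule member_le_sum) (auto simp: assms)
  then show ?thesis using False assms by (simp add: laplacian_nth)
qed

definition entries_le :: "real \<Rightarrow> real^'n^'m \<Rightarrow> bool" where
  "entries_le c P \<longleftrightarrow> (\<forall>i j. \<bar>P $ i $ j\<bar> \<le> c)"

lemma entries_le_mult:
  fixes P :: "real^'k::finite^'m" and Q :: "real^'n^'k"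
  assumes "entries_le a P" "entries_le b Q"
  shows "entries_le (real CARD('k) * a * b) (P ** Q)"
  unfolding entries_le_def
proof (intro allI)
  fix i j
  have "\<bar>(P ** Q) $ i $ j\<bar> \<le> (\<Sum>k\<in>UNIV. \<bar>P $ i $ k * Q $ k $ j\<bar>)"
    unfolding matrix_matrix_mult_def by (simp add: sum_abs)
  also have "\<dots> \<le> (\<Sum>k\<in>(UNIV::'k set). a * b)"
    using assms unfolding entries_le_def by (intro sum_mono) (simp add: abs_mult mult_mono')
  finally show "\<bar>(P ** Q) $ i $ j\<bar> \<le> real CARD('k) * a * b" by simp
qed

lemma entries_le_add:
  assumes "entries_le a P" "entries_le b Q"
  shows "entries_le (a + b) (P + Q)"
  unfolding entries_le_def
proof (intro allI)
  fix i j
  have "\<bar>P $ i $ j\<bar> \<le> a" "\<bar>Q $ i $ j\<bar> \<le> b" using assms unfolding entries_le_def by blast+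
  then show "\<bar>(P + Q) $ i $ j\<bar> \<le> a + b" by simp
qed

lemma entries_le_diff:
  assumes "entries_le a P" "entries_le b Q"
  shows "entries_le (a + b) (P - Q)"
  unfolding entries_le_def
proof (intro allI)
  fix i j
  have "\<bar>P $ i $ j\<bar> \<le> a" "\<bar>Q $ i $ j\<bar> \<le> b" using assms unfolding entries_le_def by blast+
  then show "\<bar>(P - Q) $ i $ j\<bar> \<le> a + b" by simp
qed

lemma entries_le_transpose: "entries_le a (P::real^'n^'n) \<Longrightarrow> entries_le a (transpose P)"
  unfolding entries_le_def transpose_def by simp

lemma entries_le_ones_mat: "entries_le 1 ones_mat"
  unfolding entries_le_def ones_mat_def by simp

lemma entries_le_sum_abs: "entries_le (\<Sum>i\<in>UNIV. \<Sum>j\<in>UNIV. \<bar>P $ i $ j\<bar>) (P::real^'n::finite^'m::finite)"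
  unfolding entries_le_def
proof (intro allI)
  fix i j
  have "\<bar>P $ i $ j\<bar> \<le> (\<Sum>j\<in>UNIV. \<bar>P $ i $ j\<bar>)" by (rule member_le_sum) auto
  also have "\<dots> \<le> (\<Sum>i\<in>UNIV. \<Sum>j\<in>UNIV. \<bar>P $ i $ j\<bar>)"
    by (rule member_le_sum[where f="\<lambda>i. \<Sum>j\<in>UNIV. \<bar>P $ i $ j\<bar>"]) (auto intro: sum_nonneg)
  finally show "\<bar>P $ i $ j\<bar> \<le> (\<Sum>i\<in>UNIV. \<Sum>j\<in>UNIV. \<bar>P $ i $ j\<bar>)" .
qed

lemma entries_le_laplacian:
  fixes B :: "real^'i::finite^'i"
  assumes "\<And>i. (\<Sum>l\<in>UNIV. B $ i $ l) = 1" "\<And>i j. B $ i $ j \<ge> 0"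
  shows "entries_le 1 (laplacian B)"
  unfolding entries_le_def using laplacian_entry_bound assms by blast

lemma bilinear_form_expand:
  fixes P :: "real^'i::finite^'i"
  shows "u \<bullet> (P *v v) = (\<Sum>j\<in>UNIV. \<Sum>l\<in>UNIV. (u $ j * v $ l) * P $ j $ l)"
  by (simp add: inner_vec_def matrix_vector_mult_def sum_distrib_left mult_ac)

lemma bilinear_form_bound:
  fixes P :: "real^'i::finite^'i"
  assumes "\<And>j. \<bar>u $ j\<bar> \<le> a" "entries_le b P" "\<And>j. \<bar>v $ j\<bar> \<le> c"
  shows "\<bar>u \<bullet> (P *v v)\<bar> \<le> real CARD('i) * real CARD('i) * (a * c * b)"
proof -
  have "\<bar>(u $ j * v $ l) * P $ j $ l\<bar> \<le> a * c * b" for j l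
    using assms unfolding entries_le_def by (simp add: abs_mult mult_mono' mult_mono)
  then have "\<bar>\<Sum>j\<in>UNIV. \<Sum>l\<in>UNIV. (u $ j * v $ l) * P $ j $ l\<bar>
      \<le> (\<Sum>j\<in>(UNIV::'i set). \<Sum>l\<in>(UNIV::'i set). a * c * b)"
    by (intro order_trans[OF sum_abs] sum_mono order_trans[OF sum_abs]) auto
  then show ?thesis unfolding bilinear_form_expand by simp
qed

lemma borel_measurable_bilinear_form:
  fixes P :: "'a \<Rightarrow> real^'i::finite^'i" and u v :: "'a \<Rightarrow> real^'i"
  assumes "\<And>j l. (\<lambda>\<omega>. P \<omega> $ j $ l) \<in> borel_measurable M"
    "\<And>j. (\<lambda>\<omega>. u \<omega> $ j) \<in> borel_measurable M" "\<And>j. (\<lambda>\<omega>. v \<omega> $ j) \<in> borel_measurable M"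
  shows "(\<lambda>\<omega>. u \<omega> \<bullet> (P \<omega> *v v \<omega>)) \<in> borel_measurable M"
  unfolding bilinear_form_expand
  by (intro borel_measurable_sum borel_measurable_times assms)

lemma inner_transpose: "(x::real^'i::finite) \<bullet> (transpose P *v y) = (P *v x) \<bullet> y"
  by (simp add: inner_vec_def matrix_vector_mult_def transpose_def sum_distrib_left
      sum_distrib_right mult_ac) (rule sum.swap)

lemma ones_mat_mult: "ones_mat *v y = (ones_vec \<bullet> y) *\<^sub>R ones_vec"
  by (simp add: vec_eq_iff ones_mat_def ones_vec_def matrix_vector_mult_def inner_vec_def)

lemma total_flux_square:
  fixes L :: "real^'i::finite^'i"
  shows "(ones_vec \<bullet> (L *v x))^2 = x \<bullet> ((transpose L ** ones_mat ** L) *v x)"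
proof -
  have "(transpose L ** ones_mat ** L) *v x = (ones_vec \<bullet> (L *v x)) *\<^sub>R (transpose L *v ones_vec)"
    by (simp add: matrix_vector_mul_assoc[symmetric] ones_mat_mult matrix_vector_mult_scaleR)
  then have "x \<bullet> ((transpose L ** ones_mat ** L) *v x) = (ones_vec \<bullet> (L *v x)) * ((L *v x) \<bullet> ones_vec)"
    by (simp only: inner_scaleR_right inner_transpose)
  then show ?thesis
    by (simp add: power2_eq_square inner_commute)
qed

lemma inner_self_step:
  fixes L :: "real^'i::finite^'i"
  shows "(x - L *v x) \<bullet> (x - L *v x) = x \<bullet> x - x \<bullet> ((L + transpose L - transpose L ** L) *v x)"
proof -
  have expand: "(L + transpose L - transpose L ** L) *v x
      = L *v x + transpose L *v x - transpose L *v (L *v x)"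
    by (simp add: matrix_vector_mult_add_rdistrib matrix_vector_mult_diff_rdistrib matrix_vector_mul_assoc)
  have "x \<bullet> ((L + transpose L - transpose L ** L) *v x)
      = x \<bullet> (L *v x) + (L *v x) \<bullet> x - (L *v x) \<bullet> (L *v x)"
    unfolding expand inner_diff_right inner_add_right inner_transpose ..
  then show ?thesis
    by (simp add: inner_diff_left inner_diff_right inner_commute)
qed

lemma loewner_le_form:
  fixes Q R :: "real^'i::finite^'i"
  assumes "loewner_le Q (\<gamma> *\<^sub>R R)"
  shows "v \<bullet> (Q *v v) \<le> \<gamma> * (v \<bullet> (R *v v))"
proof -
  have "v \<bullet> ((Q - \<gamma> *\<^sub>R R) *v v) \<le> 0"
    using assms unfolding loewner_le_def neg_semidef_def by blast
  then show ?thesis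
    by (simp add: matrix_vector_mult_diff_rdistrib scaleR_matrix_vector_assoc[symmetric]
        inner_diff_right)
qed

lemma avg_inner: "avg y = (ones_vec \<bullet> y) / real CARD('i)" for y :: "real^'i::finite"
  by (simp add: avg_def inner_vec_def ones_vec_def)

lemma avg_step: "avg (x - L *v x) = avg x - (ones_vec \<bullet> (L *v x)) / real CARD('i)"
  for x :: "real^'i::finite"
  by (simp add: avg_inner inner_diff_right diff_divide_distrib)

lemma avg_consensus: "avg (c *\<^sub>R (ones_vec :: real^'i::finite)) = c"
  by (simp add: avg_def ones_vec_def)

lemma tendsto_avg:
  fixes X :: "nat \<Rightarrow> real^'i::finite"
  assumes "X \<longlonglongrightarrow> y"
  shows "(\<lambda>t. avg (X t)) \<longlonglongrightarrow> avg y"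
  unfolding avg_def by (intro tendsto_intros assms) simp

lemma borel_measurable_avg: "(\<lambda>v::real^'i::finite. avg v) \<in> borel_measurable borel"
  unfolding avg_def
  by (intro borel_measurable_divide borel_measurable_sum borel_measurable_const
      borel_measurable_continuous_onI continuous_on_component continuous_on_id)

lemma avg_bound:
  fixes v :: "real^'i::finite"
  assumes "\<And>j. \<bar>v $ j\<bar> \<le> c"
  shows "\<bar>avg v\<bar> \<le> c"
proof -
  have "\<bar>\<Sum>i\<in>UNIV. v $ i\<bar> \<le> (\<Sum>i\<in>(UNIV::'i set). c)"
    by (intro order_trans[OF sum_abs] sum_mono assms)
  then show ?thesis unfolding avg_def by (simp add: divide_le_eq mult.commute)
qed

lemma inner_self_avg_Vdis:
  fixes x :: "real^'i::finite"
  shows "x \<bullet> x = real CARD('i) * Vdis x + real CARD('i) * (avg x)^2"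
proof -
  define a where "a = avg x"
  define N where "N = real CARD('i)"
  have s: "(\<Sum>i\<in>UNIV. x $ i) = N * a" unfolding a_def avg_def N_def by simp
  have "(\<Sum>i\<in>UNIV. (x $ i - a)^2) = (\<Sum>i\<in>UNIV. (x $ i)^2) - 2 * a * (\<Sum>i\<in>UNIV. x $ i) + N * a^2"
    by (simp add: power2_diff sum.distrib sum_subtractf sum_distrib_left N_def mult_ac)
  moreover have "N * Vdis x = (\<Sum>i\<in>UNIV. (x $ i - a)^2)"
    unfolding Vdis_def a_def N_def by simp
  moreover have "x \<bullet> x = (\<Sum>i\<in>UNIV. (x $ i)^2)" by (simp add: inner_vec_def power2_eq_square)
  ultimately show ?thesis using s unfolding N_def[symmetric] a_def[symmetric]
    by (simp add: power2_eq_square algebra_simps)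
qed

lemma Vdis_nonneg: "Vdis v \<ge> 0"
  unfolding Vdis_def by (intro divide_nonneg_nonneg sum_nonneg) auto

(* The process driven by a fixed sequence h of matrices; xproc A x0 t \<omega> is this
   trajectory along the realised sequence A _ \<omega>. *)
definition trajectory :: "real^'i::finite \<Rightarrow> (nat \<Rightarrow> real^'i^'i) \<Rightarrow> nat \<Rightarrow> real^'i" where
  "trajectory x0 h t = xproc (\<lambda>s (_::unit). h s) x0 t ()"

lemma trajectory_0 [simp]: "trajectory x0 h 0 = x0"
  by (simp add: trajectory_def)

lemma trajectory_Suc [simp]:
  "trajectory x0 h (Suc t) = trajectory x0 h t - laplacian (h t) *v trajectory x0 h t"
  by (simp add: trajectory_def)

lemma xproc_trajectory: "xproc A x0 t \<omega> = trajectory x0 (\<lambda>s. A s \<omega>) t"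
  by (induction t) auto

lemma trajectory_cong: "(\<And>s. s < t \<Longrightarrow> h s = h' s) \<Longrightarrow> trajectory x0 h t = trajectory x0 h' t"
  by (induction t) auto

lemma borel_measurable_laplacian_step:
  fixes B :: "'a \<Rightarrow> real^'i::finite^'i" and x :: "'a \<Rightarrow> real^'i"
  assumes "B \<in> borel_measurable M" "x \<in> borel_measurable M"
  shows "(\<lambda>\<omega>. x \<omega> - laplacian (B \<omega>) *v x \<omega>) \<in> borel_measurable M"
proof (rule borel_measurable_vec_components)
  fix i
  show "(\<lambda>\<omega>. (x \<omega> - laplacian (B \<omega>) *v x \<omega>) $ i) \<in> borel_measurable M"
    unfolding vector_minus_component matrix_vector_mult_def vec_lambda_beta
    by (intro borel_measurable_diff borel_measurable_sum borel_measurable_times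
          borel_measurable_laplacian_nth borel_measurable_vec_nth assms)
qed

lemma measurable_trajectory:
  fixes x0 :: "real^'i::finite"
  shows "t \<le> n \<Longrightarrow> (\<lambda>h. trajectory x0 h t) \<in> borel_measurable (PiM {..<n} (\<lambda>_. borel))"
proof (induction t)
  case (Suc t)
  have "(\<lambda>h. h t) \<in> measurable (PiM {..<n} (\<lambda>_. borel)) (borel :: (real^'i^'i) measure)"
    using Suc.prems by (intro measurable_component_singleton) auto
  then show ?case using Suc by (simp, intro borel_measurable_laplacian_step) auto
qed simp

lemma measurable_xproc:
  fixes x0 :: "real^'i::finite"
  assumes "\<And>t. A t \<in> borel_measurable M"
  shows "xproc A x0 t \<in> borel_measurable M"
proof -
  have "(\<lambda>\<omega>. xproc A x0 t \<omega>) \<in> borel_measurable M"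
    by (induction t) (auto intro!: borel_measurable_laplacian_step assms)
  then show ?thesis by simp
qed

lemma xproc_bound:
  fixes x0 :: "real^'i::finite"
  assumes "\<And>t i j. A t \<omega> $ i $ j \<ge> 0" "\<And>t i. (\<Sum>l\<in>UNIV. A t \<omega> $ i $ l) = 1"
  shows "\<bar>xproc A x0 t \<omega> $ i\<bar> \<le> (\<Sum>j\<in>UNIV. \<bar>x0 $ j\<bar>)"
proof (induction t arbitrary: i)
  case 0
  show ?case by simp (rule member_le_sum, auto)
next
  case (Suc t)
  then show ?case
    by (simp del: vector_minus_component) (intro laplacian_step_bound assms)
qed

lemma (in finite_measure) integrable_bounded_on_space:
  fixes f :: "'a \<Rightarrow> real"
  assumes "f \<in> borel_measurable M" "\<And>\<omega>. \<omega> \<in> space M \<Longrightarrow> \<bar>f \<omega>\<bar> \<le> C"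
  shows "integrable M f"
  by (rule integrable_const_bound[where B=C]) (auto intro!: AE_I2 assms)

lemma integral_double_sum:
  fixes f :: "'j \<Rightarrow> 'l \<Rightarrow> 'a \<Rightarrow> real"
  assumes "\<And>j l. integrable M (f j l)"
  shows "(\<integral>\<omega>. (\<Sum>j\<in>J. \<Sum>l\<in>K. f j l \<omega>) \<partial>M) = (\<Sum>j\<in>J. \<Sum>l\<in>K. integral\<^sup>L M (f j l))"
  by (simp add: assms Bochner_Integration.integrable_sum)

definition entrywise_borel :: "(real^'n^'m \<Rightarrow> real^'k^'l) \<Rightarrow> bool" where
  "entrywise_borel F \<longleftrightarrow> (\<forall>i j. (\<lambda>B. F B $ i $ j) \<in> borel_measurable borel)"

lemma entrywise_borel_mult:
  "entrywise_borel F \<Longrightarrow> entrywise_borel G \<Longrightarrow> entrywise_borel (\<lambda>B. F B ** G B)"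
  unfolding entrywise_borel_def matrix_matrix_mult_def
  by (simp add: borel_measurable_sum borel_measurable_times)

lemma entrywise_borel_add:
  "entrywise_borel F \<Longrightarrow> entrywise_borel G \<Longrightarrow> entrywise_borel (\<lambda>B. F B + G B)"
  unfolding entrywise_borel_def by (simp add: borel_measurable_add)

lemma entrywise_borel_diff:
  "entrywise_borel F \<Longrightarrow> entrywise_borel G \<Longrightarrow> entrywise_borel (\<lambda>B. F B - G B)"
  unfolding entrywise_borel_def by (simp add: borel_measurable_diff)

lemma entrywise_borel_transpose: "entrywise_borel F \<Longrightarrow> entrywise_borel (\<lambda>B. transpose (F B))"
  unfolding entrywise_borel_def transpose_def by simp

lemma entrywise_borel_const: "entrywise_borel (\<lambda>B. C)"
  unfolding entrywise_borel_def by simp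

lemma entrywise_borel_laplacian: "entrywise_borel laplacian"
  unfolding entrywise_borel_def by (intro allI borel_measurable_laplacian_nth) simp

(* L^* 1 1^* L: its quadratic form is the squared total flux 1^* L x. *)
definition flux_matrix :: "real^'i^'i \<Rightarrow> real^'i^'i::finite" where
  "flux_matrix B = transpose (laplacian B) ** ones_mat ** laplacian B"

(* L + L^* - L^* L: its quadratic form is the one-step loss of squared norm. *)
definition dissipation_matrix :: "real^'i^'i \<Rightarrow> real^'i^'i::finite" where
  "dissipation_matrix B = laplacian B + transpose (laplacian B) - transpose (laplacian B) ** laplacian B"

lemma total_flux_square_form: "(ones_vec \<bullet> (laplacian B *v x))^2 = x \<bullet> (flux_matrix B *v x)"
  unfolding flux_matrix_def by (rule total_flux_square)

lemma inner_self_laplacian_step: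
  "(x - laplacian B *v x) \<bullet> (x - laplacian B *v x) = x \<bullet> x - x \<bullet> (dissipation_matrix B *v x)"
  unfolding dissipation_matrix_def by (rule inner_self_step)

lemma entrywise_borel_flux_matrix: "entrywise_borel (flux_matrix :: real^'i^'i \<Rightarrow> real^'i^'i::finite)"
  unfolding flux_matrix_def
  by (intro entrywise_borel_mult entrywise_borel_transpose entrywise_borel_laplacian
      entrywise_borel_const)

lemma entrywise_borel_dissipation_matrix:
  "entrywise_borel (dissipation_matrix :: real^'i^'i \<Rightarrow> real^'i^'i::finite)"
  unfolding dissipation_matrix_def
  by (intro entrywise_borel_diff entrywise_borel_add entrywise_borel_mult
      entrywise_borel_transpose entrywise_borel_laplacian)

lemma entries_le_flux_matrix:
  "entries_le 1 (laplacian B) \<Longrightarrow> entries_le (real CARD('i) * real CARD('i)) (flux_matrix (B :: real^'i^'i::finite))"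
  unfolding flux_matrix_def
  using entries_le_mult[OF entries_le_mult[OF entries_le_transpose entries_le_ones_mat]]
  by fastforce

lemma entries_le_dissipation_matrix:
  fixes B :: "real^'i^'i::finite"
  assumes L: "entries_le 1 (laplacian B)"
  shows "entries_le (2 + real CARD('i)) (dissipation_matrix B)"
  using entries_le_diff[OF entries_le_add[OF L entries_le_transpose[OF L]]
      entries_le_mult[OF entries_le_transpose[OF L] L]]
  unfolding dissipation_matrix_def by simp

lemma lyapunov_arith:
  fixes N g S Z Z0 V m :: real
  assumes N: "N > 0" and g: "g > 0" and lyap: "S + g / N^2 * Z \<le> g / N^2 * Z0"
    and lower: "N * (S + m^2) \<le> Z" and init: "Z0 = N * V + N * m^2"
  shows "S \<le> g / (N + g) * V"
proof -
  have "g / N^2 * (N * (S + m^2)) \<le> g / N^2 * Z"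
    using lower g N by (intro mult_left_mono) auto
  then have "S + g / N * (S + m^2) \<le> g / N * (V + m^2)"
    using lyap N unfolding init by (simp add: power2_eq_square distrib_left)
  then have "N * (S + g / N * (S + m^2)) \<le> N * (g / N * (V + m^2))"
    using N by (intro mult_left_mono) auto
  then have "N * S + g * (S + m^2) \<le> g * (V + m^2)"
    using N by (simp add: distrib_left)
  then have "S * (N + g) \<le> g * V" by (simp add: algebra_simps)
  then show ?thesis using N g by (simp add: field_simps)
qed

locale consensus_process = prob_space M
  for M :: "'w measure" +
  fixes A :: "nat \<Rightarrow> 'w \<Rightarrow> real^'i::finite^'i" and x0 :: "real^'i"
  assumes A_meas: "\<And>t. A t \<in> borel_measurable M"
    and A_indep: "indep_vars (\<lambda>_. borel) A UNIV"
    and A_nonneg: "\<And>t \<omega> i j. \<omega> \<in> space M \<Longrightarrow> A t \<omega> $ i $ j \<ge> 0"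
    and A_stoch: "\<And>t \<omega> i. \<omega> \<in> space M \<Longrightarrow> (\<Sum>l\<in>UNIV. A t \<omega> $ i $ l) = 1"
begin

abbreviation X :: "nat \<Rightarrow> 'w \<Rightarrow> real^'i" where
  "X t \<equiv> xproc A x0 t"

abbreviation state_bound :: real where
  "state_bound \<equiv> \<Sum>j\<in>UNIV. \<bar>x0 $ j\<bar>"

lemma X_bound: "\<omega> \<in> space M \<Longrightarrow> \<bar>X t \<omega> $ j\<bar> \<le> state_bound"
  by (rule xproc_bound) (auto intro: A_nonneg A_stoch)

lemma X_meas: "X t \<in> borel_measurable M"
  by (rule measurable_xproc[OF A_meas])

lemma X_nth_meas: "(\<lambda>\<omega>. X t \<omega> $ j) \<in> borel_measurable M"
  by (rule borel_measurable_vec_nth[OF X_meas])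

lemma laplacian_A_bound: "\<omega> \<in> space M \<Longrightarrow> entries_le 1 (laplacian (A t \<omega>))"
  by (rule entries_le_laplacian) (auto intro: A_nonneg A_stoch)

(* The current state is independent of the matrix applied to it, since x(t) is a function
   of A 0, ..., A (t-1) only; we record this for real-valued Borel functions of both. *)
lemma X_indep_A:
  fixes \<psi> :: "real^'i \<Rightarrow> real" and \<phi> :: "real^'i^'i \<Rightarrow> real"
  assumes "\<psi> \<in> borel_measurable borel" "\<phi> \<in> borel_measurable borel"
  shows "indep_var borel (\<lambda>\<omega>. \<psi> (X t \<omega>)) borel (\<lambda>\<omega>. \<phi> (A t \<omega>))"
proof -
  have restrictions: "indep_var (PiM {..<t} (\<lambda>_. borel)) (\<lambda>\<omega>. restrict (\<lambda>i. A i \<omega>) {..<t})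
      (PiM {t} (\<lambda>_. borel)) (\<lambda>\<omega>. restrict (\<lambda>i. A i \<omega>) {t})"
    by (rule indep_var_restrict[OF A_indep]) auto
  have "(\<lambda>h. \<psi> (trajectory x0 h t)) \<in> borel_measurable (PiM {..<t} (\<lambda>_. borel))"
    by (rule measurable_compose[OF measurable_trajectory assms(1)]) simp
  moreover have "(\<lambda>h. \<phi> (h t)) \<in> borel_measurable (PiM {t} (\<lambda>_. borel))"
    by (rule measurable_compose[OF measurable_component_singleton[where I="{t}"] assms(2)]) simp
  ultimately have "indep_var borel ((\<lambda>h. \<psi> (trajectory x0 h t)) \<circ> (\<lambda>\<omega>. restrict (\<lambda>i. A i \<omega>) {..<t}))
      borel ((\<lambda>h. \<phi> (h t)) \<circ> (\<lambda>\<omega>. restrict (\<lambda>i. A i \<omega>) {t}))"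
    by (rule indep_var_compose[OF restrictions])
  moreover have "trajectory x0 (restrict (\<lambda>i. A i \<omega>) {..<t}) t = X t \<omega>" for \<omega>
    by (simp add: xproc_trajectory cong: trajectory_cong)
  ultimately show ?thesis by (simp add: comp_def)
qed

lemma expectation_product:
  fixes \<psi> :: "real^'i \<Rightarrow> real" and \<phi> :: "real^'i^'i \<Rightarrow> real"
  assumes "\<psi> \<in> borel_measurable borel" "\<phi> \<in> borel_measurable borel"
    and "\<And>\<omega>. \<omega> \<in> space M \<Longrightarrow> \<bar>\<psi> (X t \<omega>)\<bar> \<le> a"
    and "\<And>\<omega>. \<omega> \<in> space M \<Longrightarrow> \<bar>\<phi> (A t \<omega>)\<bar> \<le> b"
  shows "expectation (\<lambda>\<omega>. \<psi> (X t \<omega>) * \<phi> (A t \<omega>))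
       = expectation (\<lambda>\<omega>. \<psi> (X t \<omega>)) * expectation (\<lambda>\<omega>. \<phi> (A t \<omega>))"
proof (rule indep_var_lebesgue_integral)
  show "indep_var borel (\<lambda>\<omega>. \<psi> (X t \<omega>)) borel (\<lambda>\<omega>. \<phi> (A t \<omega>))"
    by (rule X_indep_A[OF assms(1,2)])
  show "integrable M (\<lambda>\<omega>. \<psi> (X t \<omega>))"
    by (rule integrable_bounded_on_space[OF measurable_compose[OF X_meas assms(1)] assms(3)])
  show "integrable M (\<lambda>\<omega>. \<phi> (A t \<omega>))"
    by (rule integrable_bounded_on_space[OF measurable_compose[OF A_meas assms(2)] assms(4)])
qed

lemma integrable_bilinear_form:
  fixes W :: "'w \<Rightarrow> real^'i" and P :: "'w \<Rightarrow> real^'i^'i"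
  assumes "\<And>\<omega> j. \<omega> \<in> space M \<Longrightarrow> \<bar>W \<omega> $ j\<bar> \<le> b" "\<And>j. (\<lambda>\<omega>. W \<omega> $ j) \<in> borel_measurable M"
    and "\<And>\<omega>. \<omega> \<in> space M \<Longrightarrow> entries_le c (P \<omega>)" "\<And>j l. (\<lambda>\<omega>. P \<omega> $ j $ l) \<in> borel_measurable M"
  shows "integrable M (\<lambda>\<omega>. W \<omega> \<bullet> (P \<omega> *v X t \<omega>))"
  by (rule integrable_bounded_on_space[where C="real CARD('i) * real CARD('i) * (b * state_bound * c)"])
     (intro borel_measurable_bilinear_form bilinear_form_bound assms X_nth_meas X_bound; assumption)+

lemma expectation_bilinear_form_mean:
  fixes w :: "real^'i \<Rightarrow> real^'i" and \<Phi> :: "real^'i^'i \<Rightarrow> real^'i^'i"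
  assumes w_meas: "w \<in> borel_measurable borel"
    and w_bound: "\<And>\<omega> j. \<omega> \<in> space M \<Longrightarrow> \<bar>w (X t \<omega>) $ j\<bar> \<le> b"
    and \<Phi>_meas: "entrywise_borel \<Phi>"
    and \<Phi>_bound: "\<And>\<omega>. \<omega> \<in> space M \<Longrightarrow> entries_le c (\<Phi> (A t \<omega>))"
  shows "expectation (\<lambda>\<omega>. w (X t \<omega>) \<bullet> (\<Phi> (A t \<omega>) *v X t \<omega>))
       = expectation (\<lambda>\<omega>. w (X t \<omega>) \<bullet> (mat_expectation M (\<lambda>\<omega>. \<Phi> (A t \<omega>)) *v X t \<omega>))"
proof -
  define P where "P = mat_expectation M (\<lambda>\<omega>. \<Phi> (A t \<omega>))"
  define \<psi> where "\<psi> j l v = w v $ j * (v::real^'i) $ l" for j l v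
  have \<psi>_meas: "\<psi> j l \<in> borel_measurable borel" for j l
    unfolding \<psi>_def
    by (intro borel_measurable_times borel_measurable_vec_nth w_meas
        borel_measurable_continuous_onI continuous_on_component continuous_on_id)
  have \<psi>_bound: "\<omega> \<in> space M \<Longrightarrow> \<bar>\<psi> j l (X t \<omega>)\<bar> \<le> b * state_bound" for \<omega> j l
    unfolding \<psi>_def abs_mult by (intro mult_mono' w_bound X_bound) auto
  have \<phi>_meas: "(\<lambda>B. \<Phi> B $ j $ l) \<in> borel_measurable borel" for j l
    using \<Phi>_meas unfolding entrywise_borel_def by blast
  have \<phi>_bound: "\<omega> \<in> space M \<Longrightarrow> \<bar>\<Phi> (A t \<omega>) $ j $ l\<bar> \<le> c" for \<omega> j l
    using \<Phi>_bound unfolding entries_le_def by blast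
  have \<psi>_int: "integrable M (\<lambda>\<omega>. \<psi> j l (X t \<omega>))" for j l
    by (rule integrable_bounded_on_space[OF measurable_compose[OF X_meas \<psi>_meas] \<psi>_bound])
  have factor: "expectation (\<lambda>\<omega>. \<psi> j l (X t \<omega>) * \<Phi> (A t \<omega>) $ j $ l)
      = expectation (\<lambda>\<omega>. \<psi> j l (X t \<omega>) * P $ j $ l)" for j l
    using expectation_product[OF \<psi>_meas \<phi>_meas \<psi>_bound \<phi>_bound]
    by (simp add: P_def mat_expectation_def)
  have int_random: "integrable M (\<lambda>\<omega>. \<psi> j l (X t \<omega>) * \<Phi> (A t \<omega>) $ j $ l)" for j l
    by (rule integrable_bounded_on_space[where C="b * state_bound * c"])
       (auto simp: abs_mult intro!: mult_mono' \<psi>_bound \<phi>_bound borel_measurable_times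
         measurable_compose[OF X_meas \<psi>_meas] measurable_compose[OF A_meas \<phi>_meas])
  have "expectation (\<lambda>\<omega>. w (X t \<omega>) \<bullet> (\<Phi> (A t \<omega>) *v X t \<omega>))
      = (\<Sum>j\<in>UNIV. \<Sum>l\<in>UNIV. expectation (\<lambda>\<omega>. \<psi> j l (X t \<omega>) * \<Phi> (A t \<omega>) $ j $ l))"
    unfolding bilinear_form_expand \<psi>_def[symmetric] by (rule integral_double_sum[OF int_random])
  also have "\<dots> = (\<Sum>j\<in>UNIV. \<Sum>l\<in>UNIV. expectation (\<lambda>\<omega>. \<psi> j l (X t \<omega>) * P $ j $ l))"
    by (simp add: factor)
  also have "\<dots> = expectation (\<lambda>\<omega>. w (X t \<omega>) \<bullet> (P *v X t \<omega>))"
    unfolding bilinear_form_expand \<psi>_def[symmetric]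
    by (rule integral_double_sum[symmetric]) (simp add: \<psi>_int)
  finally show ?thesis unfolding P_def .
qed

abbreviation flux :: "nat \<Rightarrow> 'w \<Rightarrow> real" where
  "flux t \<omega> \<equiv> ones_vec \<bullet> (laplacian (A t \<omega>) *v X t \<omega>)"

abbreviation dev :: "nat \<Rightarrow> 'w \<Rightarrow> real" where
  "dev t \<omega> \<equiv> avg (X t \<omega>) - avg x0"

abbreviation energy :: "nat \<Rightarrow> real" where
  "energy t \<equiv> expectation (\<lambda>\<omega>. X t \<omega> \<bullet> X t \<omega>)"

lemma flux_matrix_bound:
  "\<omega> \<in> space M \<Longrightarrow> entries_le (real CARD('i) * real CARD('i)) (flux_matrix (A t \<omega>))"
  by (intro entries_le_flux_matrix laplacian_A_bound)

lemma dissipation_matrix_bound: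
  "\<omega> \<in> space M \<Longrightarrow> entries_le (2 + real CARD('i)) (dissipation_matrix (A t \<omega>))"
  by (intro entries_le_dissipation_matrix laplacian_A_bound)

lemma dev_Suc: "dev (Suc t) \<omega> = dev t \<omega> - flux t \<omega> / real CARD('i)"
  by (simp add: avg_step)

lemma dev_bound: "\<omega> \<in> space M \<Longrightarrow> \<bar>dev t \<omega>\<bar> \<le> state_bound + \<bar>avg x0\<bar>"
  using avg_bound[OF X_bound, of \<omega> t] by linarith

lemma flux_bound: "\<omega> \<in> space M \<Longrightarrow> \<bar>flux t \<omega>\<bar> \<le> real CARD('i) * real CARD('i) * state_bound"
  using bilinear_form_bound[of ones_vec 1 1 "laplacian (A t \<omega>)" "X t \<omega>" state_bound]
  by (simp add: ones_vec_def laplacian_A_bound X_bound)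

lemma dev_meas: "dev t \<in> borel_measurable M"
  by (intro borel_measurable_diff borel_measurable_const
      measurable_compose[OF X_meas borel_measurable_avg])

lemma flux_meas: "flux t \<in> borel_measurable M"
  by (intro borel_measurable_bilinear_form borel_measurable_const
      borel_measurable_laplacian_nth A_meas X_nth_meas)

lemma integrable_dev_flux:
  shows "integrable M (dev t)" and "integrable M (flux t)"
    and "integrable M (\<lambda>\<omega>. (dev t \<omega>)^2)" and "integrable M (\<lambda>\<omega>. (flux t \<omega>)^2)"
    and "integrable M (\<lambda>\<omega>. dev t \<omega> * flux t \<omega>)"
proof -
  have prod: "\<bar>f\<bar> \<le> a \<Longrightarrow> \<bar>g\<bar> \<le> b \<Longrightarrow> \<bar>f * g\<bar> \<le> a * b" for f g a b :: real
    by (simp add: abs_mult mult_mono')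
  show "integrable M (dev t)"
    by (rule integrable_bounded_on_space[OF dev_meas dev_bound])
  show "integrable M (flux t)"
    by (rule integrable_bounded_on_space[OF flux_meas flux_bound])
  show "integrable M (\<lambda>\<omega>. (dev t \<omega>)^2)"
    unfolding power2_eq_square
    by (rule integrable_bounded_on_space[OF borel_measurable_times[OF dev_meas dev_meas]
          prod[OF dev_bound dev_bound]])
  show "integrable M (\<lambda>\<omega>. (flux t \<omega>)^2)"
    unfolding power2_eq_square
    by (rule integrable_bounded_on_space[OF borel_measurable_times[OF flux_meas flux_meas]
          prod[OF flux_bound flux_bound]])
  show "integrable M (\<lambda>\<omega>. dev t \<omega> * flux t \<omega>)"
    by (rule integrable_bounded_on_space[OF borel_measurable_times[OF dev_meas flux_meas]
          prod[OF dev_bound flux_bound]])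
qed

lemma integrable_quadratic_form: "integrable M (\<lambda>\<omega>. X t \<omega> \<bullet> (P *v X t \<omega>))"
  by (rule integrable_bilinear_form[OF X_bound X_nth_meas entries_le_sum_abs borel_measurable_const])

lemma integrable_inner_self: "integrable M (\<lambda>\<omega>. X t \<omega> \<bullet> X t \<omega>)"
  using integrable_quadratic_form[of t "mat 1"] by simp

end

locale consensus_hypotheses = consensus_process M A x0
  for M :: "'w measure" and A :: "nat \<Rightarrow> 'w \<Rightarrow> real^'i::finite^'i" and x0 :: "real^'i" +
  fixes \<gamma> :: real
  assumes mean_laplacian_columns: "\<And>t. ones_vec v* mat_expectation M (\<lambda>\<omega>. laplacian (A t \<omega>)) = 0"
    and gamma_pos: "\<gamma> > 0"
    and flux_dissipation_loewner: "\<And>t. loewner_le (mat_expectation M (\<lambda>\<omega>. flux_matrix (A t \<omega>)))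
        (\<gamma> *\<^sub>R mat_expectation M (\<lambda>\<omega>. dissipation_matrix (A t \<omega>)))"
begin

lemma flux_uncorrelated:
  assumes f_meas: "f \<in> borel_measurable borel"
    and f_bound: "\<And>\<omega>. \<omega> \<in> space M \<Longrightarrow> \<bar>f (X t \<omega>)\<bar> \<le> a"
  shows "expectation (\<lambda>\<omega>. f (X t \<omega>) * flux t \<omega>) = 0"
proof -
  have "expectation (\<lambda>\<omega>. (f (X t \<omega>) *\<^sub>R ones_vec) \<bullet> (laplacian (A t \<omega>) *v X t \<omega>))
      = expectation (\<lambda>\<omega>. (f (X t \<omega>) *\<^sub>R ones_vec)
          \<bullet> (mat_expectation M (\<lambda>\<omega>. laplacian (A t \<omega>)) *v X t \<omega>))"
    by (rule expectation_bilinear_form_mean[where b=a and c=1])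
       (auto simp: ones_vec_def f_bound laplacian_A_bound entrywise_borel_laplacian
         intro: borel_measurable_scaleR f_meas)
  then show ?thesis
    unfolding inner_scaleR_left by (simp add: dot_lmul_matrix[symmetric] mean_laplacian_columns)
qed

lemma flux_second_moment:
  "expectation (\<lambda>\<omega>. (flux t \<omega>)^2)
     = expectation (\<lambda>\<omega>. X t \<omega> \<bullet> (mat_expectation M (\<lambda>\<omega>. flux_matrix (A t \<omega>)) *v X t \<omega>))"
  unfolding total_flux_square_form
  by (rule expectation_bilinear_form_mean[where b=state_bound,
        OF _ _ entrywise_borel_flux_matrix flux_matrix_bound])
     (auto simp: X_bound)

lemma energy_Suc:
  "energy (Suc t) = energy t
     - expectation (\<lambda>\<omega>. X t \<omega> \<bullet> (mat_expectation M (\<lambda>\<omega>. dissipation_matrix (A t \<omega>)) *v X t \<omega>))"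
proof -
  have "integrable M (\<lambda>\<omega>. X t \<omega> \<bullet> (dissipation_matrix (A t \<omega>) *v X t \<omega>))"
    using entrywise_borel_dissipation_matrix unfolding entrywise_borel_def
    by (intro integrable_bilinear_form[OF X_bound X_nth_meas dissipation_matrix_bound]
        measurable_compose[OF A_meas]) auto
  then have "energy (Suc t) = energy t - expectation (\<lambda>\<omega>. X t \<omega> \<bullet> (dissipation_matrix (A t \<omega>) *v X t \<omega>))"
    by (simp add: inner_self_laplacian_step integrable_inner_self)
  also have "expectation (\<lambda>\<omega>. X t \<omega> \<bullet> (dissipation_matrix (A t \<omega>) *v X t \<omega>))
      = expectation (\<lambda>\<omega>. X t \<omega> \<bullet> (mat_expectation M (\<lambda>\<omega>. dissipation_matrix (A t \<omega>)) *v X t \<omega>))"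
    by (rule expectation_bilinear_form_mean[where b=state_bound,
          OF _ _ entrywise_borel_dissipation_matrix dissipation_matrix_bound]) (auto simp: X_bound)
  finally show ?thesis .
qed

lemma flux_second_moment_le: "expectation (\<lambda>\<omega>. (flux t \<omega>)^2) \<le> \<gamma> * (energy t - energy (Suc t))"
proof -
  let ?Q = "mat_expectation M (\<lambda>\<omega>. flux_matrix (A t \<omega>))"
  let ?R = "mat_expectation M (\<lambda>\<omega>. dissipation_matrix (A t \<omega>))"
  have "expectation (\<lambda>\<omega>. X t \<omega> \<bullet> (?Q *v X t \<omega>)) \<le> expectation (\<lambda>\<omega>. \<gamma> * (X t \<omega> \<bullet> (?R *v X t \<omega>)))"
    by (intro integral_mono loewner_le_form flux_dissipation_loewner integrable_mult_right
        integrable_quadratic_form)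
  then show ?thesis
    unfolding flux_second_moment energy_Suc[of t] by simp
qed

lemma expectation_dev: "expectation (dev t) = 0"
proof (induction t)
  case (Suc t)
  have "expectation (flux t) = 0"
    using flux_uncorrelated[of "\<lambda>_. 1" t 1] by simp
  then show ?case
    unfolding dev_Suc using Suc.IH integrable_dev_flux(1,2)[of t] by simp
qed simp

(* The mean-square deviation grows exactly by the flux variance over N^2,
   because the flux is uncorrelated with the current deviation. *)
lemma msd_Suc:
  "expectation (\<lambda>\<omega>. (dev (Suc t) \<omega>)^2)
     = expectation (\<lambda>\<omega>. (dev t \<omega>)^2) + expectation (\<lambda>\<omega>. (flux t \<omega>)^2) / (real CARD('i))^2"
proof -
  have "expectation (\<lambda>\<omega>. dev t \<omega> * flux t \<omega>) = 0"
    using flux_uncorrelated[OF borel_measurable_diff[OF borel_measurable_avg borel_measurable_const]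
        dev_bound] .
  moreover have "(dev t \<omega> - flux t \<omega> / real CARD('i))^2 = (dev t \<omega>)^2
      - (2 / real CARD('i)) * (dev t \<omega> * flux t \<omega>) + (flux t \<omega>)^2 / (real CARD('i))^2" for \<omega>
    by (simp add: power2_eq_square field_simps)
  ultimately show ?thesis
    unfolding dev_Suc using integrable_dev_flux(3-5)[of t] by simp
qed

lemma lyapunov:
  "expectation (\<lambda>\<omega>. (dev t \<omega>)^2) + \<gamma> / (real CARD('i))^2 * energy t
     \<le> \<gamma> / (real CARD('i))^2 * energy 0"
proof (induction t)
  case (Suc t)
  have "expectation (\<lambda>\<omega>. (flux t \<omega>)^2) / (real CARD('i))^2
      \<le> \<gamma> / (real CARD('i))^2 * (energy t - energy (Suc t))"
    using divide_right_mono[OF flux_second_moment_le, of "(real CARD('i))^2" t] by simp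
  then show ?case
    using Suc.IH unfolding msd_Suc by (simp add: right_diff_distrib)
qed simp

lemma energy_lower: "real CARD('i) * (expectation (\<lambda>\<omega>. (dev t \<omega>)^2) + (avg x0)^2) \<le> energy t"
proof -
  have "real CARD('i) * ((dev t \<omega>)^2 + 2 * avg x0 * dev t \<omega> + (avg x0)^2) \<le> X t \<omega> \<bullet> X t \<omega>"
    for \<omega>
    using inner_self_avg_Vdis[of "X t \<omega>"] Vdis_nonneg[of "X t \<omega>"]
    by (simp add: power2_eq_square algebra_simps)
  then have "expectation (\<lambda>\<omega>. real CARD('i) * ((dev t \<omega>)^2 + 2 * avg x0 * dev t \<omega> + (avg x0)^2))
      \<le> energy t"
    using integrable_dev_flux(1,3)[of t] integrable_inner_self[of t] by (intro integral_mono) auto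
  then show ?thesis
    using integrable_dev_flux(1,3)[of t] expectation_dev[of t] by (simp add: prob_space)
qed

lemma energy_0: "energy 0 = real CARD('i) * Vdis x0 + real CARD('i) * (avg x0)^2"
  by (simp add: inner_self_avg_Vdis prob_space)

lemma msd_bound: "expectation (\<lambda>\<omega>. (dev t \<omega>)^2) \<le> \<gamma> / (real CARD('i) + \<gamma>) * Vdis x0"
  by (rule lyapunov_arith[OF _ gamma_pos lyapunov energy_lower energy_0]) simp

lemma consensus_limit_bound:
  assumes xinf_meas: "xinf \<in> borel_measurable M"
    and consensus: "AE \<omega> in M. (\<lambda>t. X t \<omega>) \<longlonglongrightarrow> xinf \<omega> *\<^sub>R ones_vec"
  shows "expectation (\<lambda>\<omega>. (xinf \<omega> - avg x0)^2) \<le> \<gamma> / (real CARD('i) + \<gamma>) * Vdis x0"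
proof -
  let ?C = "(state_bound + \<bar>avg x0\<bar>)^2"
  have "AE \<omega> in M. (\<lambda>t. (dev t \<omega>)^2) \<longlonglongrightarrow> (xinf \<omega> - avg x0)^2"
    using consensus
  proof (rule eventually_mono)
    fix \<omega> assume "(\<lambda>t. X t \<omega>) \<longlonglongrightarrow> xinf \<omega> *\<^sub>R ones_vec"
    then have "(\<lambda>t. avg (X t \<omega>)) \<longlonglongrightarrow> xinf \<omega>"
      using tendsto_avg avg_consensus by metis
    then show "(\<lambda>t. (dev t \<omega>)^2) \<longlonglongrightarrow> (xinf \<omega> - avg x0)^2"
      by (intro tendsto_intros)
  qed
  moreover have "AE \<omega> in M. norm ((dev t \<omega>)^2) \<le> ?C" for t
  proof (rule AE_I2)
    fix \<omega> assume "\<omega> \<in> space M"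
    then have "\<bar>dev t \<omega>\<bar>^2 \<le> ?C"
      by (intro power_mono dev_bound) auto
    then show "norm ((dev t \<omega>)^2) \<le> ?C" by simp
  qed
  ultimately have "(\<lambda>t. expectation (\<lambda>\<omega>. (dev t \<omega>)^2)) \<longlonglongrightarrow> expectation (\<lambda>\<omega>. (xinf \<omega> - avg x0)^2)"
    using xinf_meas dev_meas
    by (intro integral_dominated_convergence[where w="\<lambda>_. ?C"]) auto
  then show ?thesis
    using msd_bound by (intro LIMSEQ_le_const2) auto
qed

end

theorem theorem1:
  fixes M :: "'w measure" and A :: "nat \<Rightarrow> 'w \<Rightarrow> real^'i^'i::finite"
    and x0 :: "real^'i" and \<gamma> :: real
  assumes P: "prob_space M"
    and A_meas: "\<And>t. A t \<in> borel_measurable M"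
    and A_indep: "prob_space.indep_vars M (\<lambda>_. borel) A UNIV"
    and A_ident: "\<And>t. distr M borel (A t) = distr M borel (A 0)"
    and A_nonneg: "\<And>t \<omega> i j. \<omega> \<in> space M \<Longrightarrow> A t \<omega> $ i $ j \<ge> 0"
    and A_stoch: "\<And>t \<omega> i. \<omega> \<in> space M \<Longrightarrow> (\<Sum>l\<in>UNIV. A t \<omega> $ i $ l) = 1"
    and H1: "\<And>t. ones_vec v* mat_expectation M (\<lambda>\<omega>. laplacian (A t \<omega>)) = 0"
    and gpos: "\<gamma> > 0"
    and H2: "\<And>t. loewner_le
        (mat_expectation M (\<lambda>\<omega>. transpose (laplacian (A t \<omega>)) ** ones_mat ** laplacian (A t \<omega>)))
        (\<gamma> *\<^sub>R mat_expectation M (\<lambda>\<omega>. laplacian (A t \<omega>) + transpose (laplacian (A t \<omega>))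
              - transpose (laplacian (A t \<omega>)) ** laplacian (A t \<omega>)))"
  shows "(\<forall>t. prob_space.expectation M (\<lambda>\<omega>. (avg (xproc A x0 t \<omega>) - avg x0)^2)
            \<le> \<gamma> / (real CARD('i) + \<gamma>) * Vdis x0)
     \<and> (\<forall>xinf \<in> borel_measurable M.
          (AE \<omega> in M. (\<lambda>t. xproc A x0 t \<omega>) \<longlonglongrightarrow> xinf \<omega> *\<^sub>R ones_vec)
          \<longrightarrow> prob_space.expectation M (\<lambda>\<omega>. (xinf \<omega> - avg x0)^2)
                \<le> \<gamma> / (real CARD('i) + \<gamma>) * Vdis x0)"
proof -
  interpret consensus_hypotheses M A x0 \<gamma>
    unfolding consensus_hypotheses_def consensus_process_def consensus_process_axioms_def
      consensus_hypotheses_axioms_def flux_matrix_def dissipation_matrix_def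
    using assms by blast
  show ?thesis
    using msd_bound consensus_limit_bound by blast
qed

end
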